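(* Let $G$ be a graph and let $H$ be an induced subdivision of the $1$-pan in $G$ having the minimum number of vertices among all induced subdivisions of the $1$-pan in $G$. Write $H=(u,C)$, where $u$ is the vertex of degree $1$ of $H$ and $C$ is the cycle of $H$. If $|V(C)|\ge 5$, then every vertex of $V(G)\setminus V(H)$ has at most one neighbor in $V(C)$.
   Context: All graphs are finite and simple. An induced subdivision of a graph $F$ in $G$ is an induced subgraph of $G$ isomorphic to a graph obtained from $F$ by repeatedly replacing edges by paths of length $2$ through new vertices. The $1$-pan is the graph obtained from a triangle by adding a new vertex adjacent to exactly one vertex of the triangle; an induced subdivision of it consists of an induced cycle $C$ and one further vertex $u$ adjacent to exactly one vertex of $C$. *)

theory Defs
  imports Main
begin

definition simple_graph :: "'a set \<Rightarrow> ('a \<Rightarrow> 'a \<Rightarrow> bool) \<Rightarrow> bool" where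
  "simple_graph V E \<longleftrightarrow> finite V \<and> (\<forall>x y. E x y \<longrightarrow> E y x) \<and> (\<forall>x. \<not> E x x)
     \<and> (\<forall>x y. E x y \<longrightarrow> x \<in> V \<and> y \<in> V)"

definition induced_cycle :: "'a set \<Rightarrow> ('a \<Rightarrow> 'a \<Rightarrow> bool) \<Rightarrow> 'a list \<Rightarrow> bool" where
  "induced_cycle V E cs \<longleftrightarrow> length cs \<ge> 3 \<and> distinct cs \<and> set cs \<subseteq> V \<and>
     (\<forall>i < length cs. \<forall>j < length cs.
        E (cs ! i) (cs ! j) \<longleftrightarrow> (j = Suc i mod length cs \<or> i = Suc j mod length cs))"

text \<open>An induced subdivision of the 1-pan: an induced cycle C (given as a cyclic list)
  together with a vertex u outside C adjacent to exactly one vertex of C.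
  Its vertex set is set C \<union> {u}.\<close>
definition induced_pan :: "'a set \<Rightarrow> ('a \<Rightarrow> 'a \<Rightarrow> bool) \<Rightarrow> 'a \<Rightarrow> 'a list \<Rightarrow> bool" where
  "induced_pan V E u C \<longleftrightarrow> induced_cycle V E C \<and> u \<in> V \<and> u \<notin> set C \<and>
     card {c \<in> set C. E u c} = 1"

end

theory Submission
  imports Defs
begin

text \<open>
  Let c(i) be the vertices of C, indices modulo n \<ge> 5, and let v \<notin> V(H) have two
  neighbours on C. If v sees all of C, then v and two consecutive cycle vertices form a
  triangle to which u (at v or at its attachment vertex) is a pendant: a 1-pan on
  4 < n + 1 vertices. Otherwise some non-neighbour c(a) of v is followed by a neighbour
  c(a+1); if c(a+1+d) is the next neighbour, then v, c(a+1), ..., c(a+1+d) is an induced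
  cycle with pendant c(a), a 1-pan on d + 3 vertices, which beats H when d \<le> n - 3.
  The only other possibility, d = n - 2, means that v sees exactly c(a-1) and c(a+1),
  and then the gap across c(a) has d = 2 \<le> n - 3.
\<close>

lemma mod_add_left_cancel_less:
  fixes n :: nat
  assumes "x < n" "y < n"
  shows "(a + x) mod n = (a + y) mod n \<longleftrightarrow> x = y"
proof
  assume eq: "(a + x) mod n = (a + y) mod n"
  show "x = y"
  proof (rule ccontr)
    assume "x \<noteq> y"
    then consider "x < y" | "y < x" by linarith
    then show False
    proof cases
      case 1
      then have "n dvd y - x" using eq mod_eq_dvd_iff_nat[of "a + x" "a + y" n] by simp
      then show False using 1 assms nat_dvd_not_less[of "y - x" n] by simp
    next
      case 2
      then have "n dvd x - y" using eq mod_eq_dvd_iff_nat[of "a + y" "a + x" n] by simp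
      then show False using 2 assms nat_dvd_not_less[of "x - y" n] by simp
    qed
  qed
qed simp

lemma periodic_add_mult:
  fixes N :: "nat \<Rightarrow> bool"
  assumes "\<And>i. N (i + n) = N i"
  shows "N (i + k * n) = N i"
proof (induction k)
  case (Suc k)
  have "i + Suc k * n = (i + k * n) + n" by simp
  then show ?case using assms Suc.IH by presburger
qed simp

lemma exists_rising_step:
  assumes "\<not> N c" "N (c + j)"
  shows "\<exists>a. \<not> N a \<and> N (Suc a)"
  using assms
proof (induction j arbitrary: c)
  case (Suc j)
  show ?case
  proof (cases "N (Suc c)")
    case False
    then show ?thesis using Suc.IH[of "Suc c"] Suc.prems(2) by simp
  qed (use Suc.prems(1) in blast)
qed simp

lemma periodic_first_return:
  fixes N :: "nat \<Rightarrow> bool"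
  assumes per: "\<And>i. N (i + n) = N i" and "0 < n"
    and "N b" "b mod n \<noteq> s mod n"
  shows "\<exists>d. 0 < d \<and> d < n \<and> N (s + d) \<and> (\<forall>k. 0 < k \<and> k < d \<longrightarrow> \<not> N (s + k))"
proof -
  define e where "e = b + s * n - s"
  have se: "s + e = b + s * n" unfolding e_def using \<open>0 < n\<close> by (simp add: trans_le_add2)
  define r where "r = e mod n"
  have "s + e = (s + r) + (e div n) * n" unfolding r_def by simp
  then have "N (s + r)"
    using se \<open>N b\<close> periodic_add_mult[of N n, OF per] by metis
  moreover have "r \<noteq> 0"
  proof
    assume "r = 0"
    then have "(s + e) mod n = s mod n" unfolding r_def by (simp add: mod_add_right_eq[symmetric])
    then show False using se assms(4) by simp
  qed
  ultimately have ex: "0 < r \<and> N (s + r)" by simp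
  define d where "d = (LEAST d. 0 < d \<and> N (s + d))"
  have "0 < d \<and> N (s + d)" unfolding d_def using ex by (rule LeastI)
  moreover have "d \<le> r" unfolding d_def using ex by (rule Least_le)
  moreover have "r < n" unfolding r_def using \<open>0 < n\<close> by simp
  moreover have "\<not> N (s + k)" if "0 < k" "k < d" for k
    using not_less_Least[of k "\<lambda>d. 0 < d \<and> N (s + d)"] that unfolding d_def by blast
  ultimately show ?thesis by (intro exI[of _ d]) auto
qed

lemma periodic_gap:
  fixes N :: "nat \<Rightarrow> bool"
  assumes per: "\<And>i. N (i + n) = N i" and "5 \<le> n"
    and "N b\<^sub>1" "N b\<^sub>2" "b\<^sub>1 mod n \<noteq> b\<^sub>2 mod n" "\<not> N c"
  shows "\<exists>a d. \<not> N a \<and> 0 < d \<and> d + 3 \<le> n \<and> (\<forall>k \<le> d. N (Suc a + k) \<longleftrightarrow> k = 0 \<or> k = d)"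
proof -
  have "N (c + (b\<^sub>1 + c * n - c))"
    using \<open>N b\<^sub>1\<close> \<open>5 \<le> n\<close> periodic_add_mult[of N n, OF per, of b\<^sub>1 c]
    by (simp add: trans_le_add2)
  then obtain a where a: "\<not> N a" "N (Suc a)" using exists_rising_step \<open>\<not> N c\<close> by blast
  obtain b where "N b" "b mod n \<noteq> Suc a mod n"
    using assms(3-5) by metis
  then obtain d where d: "0 < d" "d < n" "N (Suc a + d)" "\<And>k. 0 < k \<Longrightarrow> k < d \<Longrightarrow> \<not> N (Suc a + k)"
    using periodic_first_return[of N n, OF per] \<open>5 \<le> n\<close> a(2) by (metis gr0I zero_neq_numeral le_zero_eq)
  have "Suc a + (n - 1) = a + n" using \<open>5 \<le> n\<close> by simp
  then have "d \<noteq> n - 1" using d(3) a(1) per by metis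
  then consider "d + 3 \<le> n" | "d = n - 2" using \<open>d < n\<close> by linarith
  then show ?thesis
  proof cases
    case 1
    then show ?thesis using a d by (intro exI[of _ a] exI[of _ d]) (auto simp: le_less)
  next
    case 2
    \<comment> \<open>modulo n, N holds only at Suc a and Suc a - 2, so the gap across a has length 2\<close>
    define a' where "a' = Suc a + (n - 3)"
    have "\<not> N a'" unfolding a'_def using d(4)[of "n - 3"] 2 \<open>5 \<le> n\<close> by simp
    moreover have "N (Suc a' + k) \<longleftrightarrow> k = 0 \<or> k = 2" if "k \<le> 2" for k
    proof -
      have "Suc a' + 0 = Suc a + d" "Suc a' + 1 = a + n" "Suc a' + 2 = Suc a + n"
        unfolding a'_def using 2 \<open>5 \<le> n\<close> by simp_all
      then have "N (Suc a' + 0)" "\<not> N (Suc a' + 1)" "N (Suc a' + 2)"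
        using a d(3) per by metis+
      moreover have "k = 0 \<or> k = 1 \<or> k = 2" using that by linarith
      ultimately show ?thesis by fastforce
    qed
    ultimately show ?thesis using \<open>5 \<le> n\<close> by (intro exI[of _ a'] exI[of _ 2]) auto
  qed
qed

definition induced_path :: "'a set \<Rightarrow> ('a \<Rightarrow> 'a \<Rightarrow> bool) \<Rightarrow> 'a list \<Rightarrow> bool" where
  "induced_path V E ps \<longleftrightarrow> distinct ps \<and> set ps \<subseteq> V \<and>
     (\<forall>i < length ps. \<forall>j < length ps. E (ps ! i) (ps ! j) \<longleftrightarrow> (j = Suc i \<or> i = Suc j))"

lemma induced_path_adj:
  "induced_path V E ps \<Longrightarrow> i < length ps \<Longrightarrow> j < length ps \<Longrightarrow>
    E (ps ! i) (ps ! j) \<longleftrightarrow> (j = Suc i \<or> i = Suc j)"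
  unfolding induced_path_def by blast

lemma induced_cycle_Cons_path:
  assumes "simple_graph V E" "induced_path V E P" "2 \<le> length P" "v \<in> V" "v \<notin> set P"
    and v_adj: "\<And>i. i < length P \<Longrightarrow> E v (P ! i) \<longleftrightarrow> i = 0 \<or> Suc i = length P"
  shows "induced_cycle V E (v # P)"
proof -
  have sym: "E p q \<longleftrightarrow> E q p" and irrefl: "\<not> E p p" for p q
    using assms(1) unfolding simple_graph_def by blast+
  note P_adj = induced_path_adj[OF assms(2)]
  have wrap: "Suc (Suc i) mod Suc (length P) = (if Suc i = length P then 0 else Suc (Suc i))"
    if "i < length P" for i
    using that by (cases "Suc i = length P") auto
  have "P \<noteq> []" using assms(3) by auto
  have "E ((v # P) ! i) ((v # P) ! j) \<longleftrightarrow> (j = Suc i mod Suc (length P) \<or> i = Suc j mod Suc (length P))"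
    if "i < Suc (length P)" "j < Suc (length P)" for i j
  proof (cases i)
    case 0
    show ?thesis
    proof (cases j)
      case (Suc j')
      with that have "j' < length P" by simp
      with \<open>i = 0\<close> Suc show ?thesis by (auto simp add: \<open>P \<noteq> []\<close> wrap v_adj)
    qed (simp add: \<open>i = 0\<close> \<open>P \<noteq> []\<close> irrefl)
  next
    case (Suc i')
    with that have i': "i' < length P" by simp
    show ?thesis
    proof (cases j)
      case 0
      with Suc i' show ?thesis by (simp add: \<open>P \<noteq> []\<close> wrap v_adj sym[of "P ! i'"] eq_commute[of 0])
    next
      case (Suc j')
      with that have "j' < length P" by simp
      with \<open>i = Suc i'\<close> Suc i' show ?thesis by (auto simp add: wrap P_adj)
    qed
  qed
  moreover have "distinct (v # P)" "set (v # P) \<subseteq> V" "3 \<le> length (v # P)"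
    using assms(2-5) unfolding induced_path_def by auto
  ultimately show ?thesis unfolding induced_cycle_def length_Cons by blast
qed

lemma induced_path_ConsD:
  assumes "induced_path V E (x # ps)"
  shows "induced_path V E ps"
proof -
  have "E (ps ! i) (ps ! j) \<longleftrightarrow> (j = Suc i \<or> i = Suc j)" if "i < length ps" "j < length ps" for i j
    using induced_path_adj[OF assms, of "Suc i" "Suc j"] that by simp
  then show ?thesis using assms unfolding induced_path_def by simp
qed

lemma induced_path_3:
  assumes "simple_graph V E" "distinct [x, y, z]" "{x, y, z} \<subseteq> V" "E x y" "E y z" "\<not> E x z"
  shows "induced_path V E [x, y, z]"
proof -
  have sym: "E p q \<Longrightarrow> E q p" and irrefl: "\<not> E p p" for p q
    using assms(1) unfolding simple_graph_def by blast+
  have adj: "E y x" "E z y" "\<not> E z x" "\<not> E x x" "\<not> E y y" "\<not> E z z"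
    using assms(4-6) sym irrefl by blast+
  have idx: "i < 3 \<Longrightarrow> i = 0 \<or> i = 1 \<or> i = (2::nat)" for i by linarith
  have "E ([x, y, z] ! i) ([x, y, z] ! j) \<longleftrightarrow> (j = Suc i \<or> i = Suc j)" if "i < 3" "j < 3" for i j
    using idx[OF that(1)] idx[OF that(2)] assms(4-6) adj by (elim disjE) simp_all
  then show ?thesis using assms(2,3) unfolding induced_path_def by simp
qed

lemma induced_pan_of_path:
  assumes "simple_graph V E" "induced_path V E (w # P)" "2 \<le> length P"
    "v \<in> V" "v \<notin> set (w # P)" "\<not> E v w"
    and v_adj: "\<And>i. i < length P \<Longrightarrow> E v (P ! i) \<longleftrightarrow> i = 0 \<or> Suc i = length P"
  shows "induced_pan V E w (v # P)"
proof -
  have cycle: "induced_cycle V E (v # P)"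
    using induced_cycle_Cons_path[OF assms(1) induced_path_ConsD[OF assms(2)] assms(3,4)] assms(5) v_adj
    by simp
  have P_nonempty: "0 < length P" using assms(3) by linarith
  have w_adj: "E w (P ! i) \<longleftrightarrow> i = 0" if "i < length P" for i
    using induced_path_adj[OF assms(2), of 0 "Suc i"] that by simp
  have "\<not> E w v" using assms(1,6) unfolding simple_graph_def by blast
  moreover have "P ! 0 \<in> set P" "E w (P ! 0)" using w_adj[OF P_nonempty] P_nonempty by simp_all
  ultimately have "{c \<in> set (v # P). E w c} = {P ! 0}"
    using w_adj by (auto simp: in_set_conv_nth)
  moreover have "w \<in> V" "w \<notin> set (v # P)"
    using assms(2,5) unfolding induced_path_def by auto
  ultimately show ?thesis using cycle unfolding induced_pan_def by simp
qed

lemma card_pan_vertices: "induced_pan V E u C \<Longrightarrow> card (set C \<union> {u}) = Suc (length C)"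
  unfolding induced_pan_def induced_cycle_def by (simp add: distinct_card)

locale graph_with_cycle =
  fixes V :: "'a set" and E :: "'a \<Rightarrow> 'a \<Rightarrow> bool" and C :: "'a list"
  assumes simple: "simple_graph V E" and cycle: "induced_cycle V E C"
begin

definition cyc :: "nat \<Rightarrow> 'a" where "cyc i = C ! (i mod length C)"

lemma length_pos: "0 < length C"
  using cycle unfolding induced_cycle_def by linarith

lemma cyc_in_set: "cyc i \<in> set C"
  unfolding cyc_def using length_pos by simp

lemma cyc_in_V: "cyc i \<in> V"
  using cyc_in_set cycle unfolding induced_cycle_def by blast

lemma set_eq_cyc: "c \<in> set C \<Longrightarrow> \<exists>i < length C. c = cyc i"
  unfolding cyc_def by (auto simp: in_set_conv_nth)

lemma cyc_add_length [simp]: "cyc (i + length C) = cyc i"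
  unfolding cyc_def by simp

lemma cyc_eq_iff: "cyc i = cyc j \<longleftrightarrow> i mod length C = j mod length C"
  using cycle length_pos unfolding cyc_def induced_cycle_def by (simp add: nth_eq_iff_index_eq)

lemma cyc_adj_iff:
  "E (cyc i) (cyc j) \<longleftrightarrow> j mod length C = Suc i mod length C \<or> i mod length C = Suc j mod length C"
proof -
  have "E (cyc i) (cyc j) \<longleftrightarrow>
      j mod length C = Suc (i mod length C) mod length C \<or> i mod length C = Suc (j mod length C) mod length C"
    using cycle length_pos unfolding cyc_def induced_cycle_def by simp
  then show ?thesis by (simp add: mod_Suc_eq)
qed

lemma cyc_shift_eq_iff: "i < length C \<Longrightarrow> j < length C \<Longrightarrow> cyc (a + i) = cyc (a + j) \<longleftrightarrow> i = j"
  by (simp add: cyc_eq_iff mod_add_left_cancel_less)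

lemma induced_path_arc:
  assumes "t - s < length C"
  shows "induced_path V E (map cyc [s..<t])"
proof -
  have "inj_on cyc {s..<t}"
  proof (rule inj_onI)
    fix x y assume "x \<in> {s..<t}" "y \<in> {s..<t}" "cyc x = cyc y"
    then have "cyc (s + (x - s)) = cyc (s + (y - s))" "x - s < length C" "y - s < length C"
      using assms by auto
    then have "x - s = y - s" using cyc_shift_eq_iff by blast
    then show "x = y" using \<open>x \<in> {s..<t}\<close> \<open>y \<in> {s..<t}\<close> by auto
  qed
  moreover have "E (cyc (s + i)) (cyc (s + j)) \<longleftrightarrow> (j = Suc i \<or> i = Suc j)"
    if "i < t - s" "j < t - s" for i j
    using that assms by (simp add: cyc_adj_iff mod_add_left_cancel_less flip: add_Suc_right)
  ultimately show ?thesis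
    unfolding induced_path_def by (auto simp: distinct_map cyc_in_V)
qed

lemma gap_pan:
  assumes "v \<in> V" "v \<notin> set C" "0 < d" "d + 3 \<le> length C" "\<not> E v (cyc a)"
    and v_adj: "\<And>k. k \<le> d \<Longrightarrow> E v (cyc (Suc a + k)) \<longleftrightarrow> k = 0 \<or> k = d"
  shows "induced_pan V E (cyc a) (v # map cyc [Suc a..<Suc a + Suc d])"
proof -
  let ?P = "map cyc [Suc a..<Suc a + Suc d]"
  have "cyc a # ?P = map cyc [a..<Suc a + Suc d]" by (simp add: upt_conv_Cons del: upt_Suc)
  moreover have "Suc a + Suc d - a < length C" using assms(4) by simp
  ultimately have path: "induced_path V E (cyc a # ?P)" using induced_path_arc by metis
  have len: "2 \<le> length ?P" using assms(3) by (simp del: upt_Suc)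
  have fresh: "v \<notin> set (cyc a # ?P)" using assms(2) cyc_in_set by auto
  have "E v (?P ! i) \<longleftrightarrow> i = 0 \<or> Suc i = length ?P" if "i < length ?P" for i
    using v_adj[of i] that by (auto simp del: upt_Suc)
  from induced_pan_of_path[OF simple path len assms(1) fresh assms(5) this] show ?thesis .
qed

lemma pan_attachment:
  assumes "induced_pan V E u C"
  obtains p where "\<And>k. k < length C \<Longrightarrow> E u (cyc (p + k)) \<longleftrightarrow> k = 0"
proof -
  obtain c where c: "{c \<in> set C. E u c} = {c}"
    using assms card_1_singletonE unfolding induced_pan_def by blast
  then obtain p where "c = cyc p" using set_eq_cyc by blast
  have "E u (cyc (p + k)) \<longleftrightarrow> cyc (p + k) = cyc (p + 0)" for k
    using c \<open>c = cyc p\<close> cyc_in_set by auto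
  then show ?thesis using that cyc_shift_eq_iff length_pos by blast
qed

lemma universal_vertex_pan:
  assumes "induced_pan V E u C" "4 \<le> length C" "v \<in> V" "v \<notin> set C" "v \<noteq> u"
    and v_adj: "\<forall>c \<in> set C. E v c"
  shows "\<exists>u' C'. induced_pan V E u' C' \<and> length C' = 3"
proof -
  have sym: "E p q \<Longrightarrow> E q p" for p q using simple unfolding simple_graph_def by blast
  have u: "u \<in> V" "u \<notin> set C" using assms(1) unfolding induced_pan_def by auto
  obtain p where p: "\<And>k. k < length C \<Longrightarrow> E u (cyc (p + k)) \<longleftrightarrow> k = 0"
    using pan_attachment[OF assms(1)] by blast
  have u_adj: "E u (cyc p)" using p[of 0] length_pos by simp
  have u_nonadj: "\<not> E u (cyc (p + k))" if "0 < k" "k < length C" for k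
    using p that by simp
  have cyc_adj: "E (cyc (p + k)) (cyc (p + Suc k))" for k
    by (simp add: cyc_adj_iff)
  have cyc_ne: "cyc (p + i) \<noteq> cyc (p + j)" if "i < j" "j < length C" for i j
    using cyc_shift_eq_iff that by simp
  have not_cyc: "u \<noteq> cyc i" "v \<noteq> cyc i" for i
    using u(2) assms(4) cyc_in_set by metis+
  show ?thesis
  proof (cases "E u v")
    case True
    \<comment> \<open>the triangle v, c(p+2), c(p+3) with pendant u at v\<close>
    have path: "induced_path V E [u, v, cyc (p + 2)]"
      using induced_path_3[OF simple] True v_adj cyc_in_set u(1) assms(2,3,5) not_cyc cyc_in_V
        u_nonadj[of 2] by simp
    have fresh: "cyc (p + 3) \<notin> set [u, v, cyc (p + 2)]"
      using not_cyc cyc_ne[of 2 3] assms(2) by auto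
    have "\<not> E (cyc (p + 3)) u" using sym u_nonadj[of 3] assms(2) by auto
    moreover have "E (cyc (p + 3)) ([v, cyc (p + 2)] ! i) \<longleftrightarrow> i = 0 \<or> Suc i = length [v, cyc (p + 2)]"
      if "i < length [v, cyc (p + 2)]" for i
      using that sym[OF cyc_adj[of 2]] sym v_adj cyc_in_set
      by (auto simp: less_2_cases_iff numeral_3_eq_3 numeral_2_eq_2)
    ultimately have "induced_pan V E u [cyc (p + 3), v, cyc (p + 2)]"
      using induced_pan_of_path[OF simple path _ cyc_in_V fresh] by simp
    then show ?thesis by fastforce
  next
    case False
    \<comment> \<open>the triangle v, c(p), c(p+1) with pendant u at c(p)\<close>
    have path: "induced_path V E [u, cyc p, cyc (p + 1)]"
      using induced_path_3[OF simple] u(1) not_cyc cyc_ne[of 0 1] assms(2) cyc_in_V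
        u_adj cyc_adj[of 0] u_nonadj[of 1] by simp
    have fresh: "v \<notin> set [u, cyc p, cyc (p + 1)]" using not_cyc assms(5) by auto
    have "\<not> E v u" using False sym by blast
    moreover have "E v ([cyc p, cyc (p + 1)] ! i) \<longleftrightarrow> i = 0 \<or> Suc i = length [cyc p, cyc (p + 1)]"
      if "i < length [cyc p, cyc (p + 1)]" for i
      using that v_adj cyc_in_set by (auto simp: less_2_cases_iff)
    ultimately have "induced_pan V E u [v, cyc p, cyc (p + 1)]"
      using induced_pan_of_path[OF simple path _ assms(3) fresh] by simp
    then show ?thesis by fastforce
  qed
qed

end

theorem mainTheorem13:
  fixes V :: "'a set" and E :: "'a \<Rightarrow> 'a \<Rightarrow> bool" and u :: 'a and C :: "'a list"
  assumes "simple_graph V E"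
    and "induced_pan V E u C"
    and "\<And>u' C'. induced_pan V E u' C' \<Longrightarrow> card (set C \<union> {u}) \<le> card (set C' \<union> {u'})"
    and "card (set C) \<ge> 5"
  shows "\<forall>v \<in> V - (set C \<union> {u}). card {c \<in> set C. E v c} \<le> 1"
proof (rule ballI, rule ccontr)
  fix v assume v: "v \<in> V - (set C \<union> {u})" and "\<not> card {c \<in> set C. E v c} \<le> 1"
  interpret graph_with_cycle V E C
    using assms(1,2) unfolding induced_pan_def by unfold_locales blast+
  have minimal: "length C \<le> length C'" if "induced_pan V E u' C'" for u' C'
    using assms(3)[OF that] card_pan_vertices[OF assms(2)] card_pan_vertices[OF that] by simp
  have n5: "5 \<le> length C" using assms(4) card_length order_trans by blast
  obtain b\<^sub>1 b\<^sub>2 where b: "E v (cyc b\<^sub>1)" "E v (cyc b\<^sub>2)" "b\<^sub>1 mod length C \<noteq> b\<^sub>2 mod length C"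
  proof -
    obtain x y where "x \<in> set C" "y \<in> set C" "E v x" "E v y" "x \<noteq> y"
      using \<open>\<not> card {c \<in> set C. E v c} \<le> 1\<close> by (auto simp: card_le_Suc0_iff_eq)
    then show ?thesis using that set_eq_cyc cyc_eq_iff by metis
  qed
  show False
  proof (cases "\<forall>c \<in> set C. E v c")
    case True
    have "4 \<le> length C" "v \<in> V" "v \<notin> set C" "v \<noteq> u" using n5 v by auto
    then obtain u' C' where "induced_pan V E u' C'" "length C' = 3"
      using universal_vertex_pan[OF assms(2) _ _ _ _ True] by blast
    then show False using minimal n5 by fastforce
  next
    case False
    then obtain c where "\<not> E v (cyc c)" using set_eq_cyc by blast
    then obtain a d where "\<not> E v (cyc a)" "0 < d" and short: "d + 3 \<le> length C"
      and "\<forall>k \<le> d. E v (cyc (Suc a + k)) \<longleftrightarrow> k = 0 \<or> k = d"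
      using periodic_gap[of "\<lambda>i. E v (cyc i)", OF _ n5 b] by simp blast
    then have "induced_pan V E (cyc a) (v # map cyc [Suc a..<Suc a + Suc d])"
      using gap_pan v by blast
    from minimal[OF this] show False using short by (simp del: upt_Suc)
  qed
qed

end
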